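(* Consider tuples $(A,p,q_I,q_J,\langle S,\pi\rangle,\langle S',\pi'\rangle)$, where: - $A\subset\mathcal{A}$ is a firm; - $p$ is a full-support skill distribution; - $q_I,q_J$ are full-support perceptions with $q_I\succsim_{LR}q_J$; - $\langle S,\pi\rangle,\langle S',\pi'\rangle$ are signal structures with $\langle S',\pi'\rangle\succsim_G\langle S,\pi\rangle$. Consider the following five properties: (i) $A\subset\mathcal{A}_M$; (ii) $\langle S',\pi'\rangle$ is MLR; (iii) $q_I\succsim_{LR}p$; (iv) $p\succsim_{LR}q_J$; (v) $\langle S',\pi'\rangle$ is slightly more informative than $\langle S,\pi\rangle$ for firm $A$ at perceptions $q_I$ and $q_J$. For each $k\in\{\mathrm{(i)},\dots,\mathrm{(v)}\}$ there exists such a tuple (for some finite $\Theta\subset\mathbb{R}$ with $|\Theta|\ge2$) with three features: it violates property $k$; it satisfies the other four properties; and it violates $$W_A(p,q_I,\langle S',\pi'\rangle)-W_A(p,q_J,\langle S',\pi'\rangle)\le W_A(p,q_I,\langle S,\pi\rangle)-W_A(p,q_J,\langle S,\pi\rangle).$$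
   Context: Let $\Theta\subset\mathbb{R}$ be a finite set of skill types with $|\Theta|\ge2$. Tasks are vectors $a\in\mathcal{A}:=\mathbb{R}^\Theta$. A firm is a non-empty finite set $A\subset\mathcal{A}$. It is monotone if $A\subset\mathcal{A}_M:=\{a: a(\theta')>a(\theta)\text{ whenever }\theta'>\theta\}$. A signal structure $\langle S,\pi\rangle$ consists of a non-empty finite set $S$ and a map $\pi:S\times\Theta\to[0,1]$ with $\sum_s\pi(s|\theta)=1$, such that each $s$ has $\pi(s|\theta)>0$ for some $\theta$. Pay: - $p,q\in\Delta(\Theta)$ have full support. - $q_{\langle S,\pi\rangle}(\theta|s):=q(\theta)\pi(s|\theta)/\sum_{\theta'}q(\theta')\pi(s|\theta')$. - $w_A(s,q,\langle S,\pi\rangle):=\max_{a\in A}\sum_\theta q_{\langle S,\pi\rangle}(\theta|s)a(\theta)$. - $W_A(p,q,\langle S,\pi\rangle):=\sum_\theta p(\theta)\sum_s\pi(s|\theta)w_A(s,q,\langle S,\pi\rangle)$. Orders: - $q'\succsim_{LR}q$ means $q(\theta)q'(\theta')\ge q(\theta')q'(\theta)$ whenever $\theta'>\theta$. - $\langle S',\pi'\rangle\succsim_G\langle S,\pi\rangle$ means there exists a garbling kernel $g:S\times S'\to[0,1]$ with $\sum_s g(s|s')=1$ for each $s'$ and $\pi(s|\theta)=\sum_{s'}g(s|s')\pi'(s'|\theta)$ for all $s,\theta$. - $\langle S,\pi\rangle$ is MLR if $S\subset\mathbb{R}$ and $\pi(s|\theta)\pi(s'|\theta')\ge\pi(s|\theta')\pi(s'|\theta)$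 whenever $s'>s$, $\theta'>\theta$. Slightness: $\langle S',\pi'\rangle$ is slightly more informative than $\langle S,\pi\rangle$ for firm $A$ at perception $q$ if there is a garbling kernel $g$ from $\langle S',\pi'\rangle$ to $\langle S,\pi\rangle$ such that, for all $s\in S$, $s'\in S'$ with $g(s|s')>0$, $$\arg\max_{a\in A}\sum_\theta q_{\langle S,\pi\rangle}(\theta|s)a(\theta)\cap\arg\max_{a\in A}\sum_\theta q_{\langle S',\pi'\rangle}(\theta|s')a(\theta)\neq\varnothing.$$ *)

theory Defs
  imports Complex_Main
begin

text \<open>Tasks are functions real => real (only their values on Th matter).
  Signals are reals; a signal structure is a pair (S, sg) with sg s th = sg(s|th).\<close>

definition skill_types :: "real set \<Rightarrow> bool" where
  "skill_types Th \<longleftrightarrow> finite Th \<and> card Th \<ge> 2"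

definition firm :: "(real \<Rightarrow> real) set \<Rightarrow> bool" where
  "firm A \<longleftrightarrow> finite A \<and> A \<noteq> {}"

definition monotone_firm :: "real set \<Rightarrow> (real \<Rightarrow> real) set \<Rightarrow> bool" where
  "monotone_firm Th A \<longleftrightarrow> (\<forall>a\<in>A. \<forall>th\<in>Th. \<forall>th'\<in>Th. th' > th \<longrightarrow> a th' > a th)"

definition full_support :: "real set \<Rightarrow> (real \<Rightarrow> real) \<Rightarrow> bool" where
  "full_support Th p \<longleftrightarrow> (\<forall>th\<in>Th. p th > 0) \<and> (\<Sum>th\<in>Th. p th) = 1"

definition signal_structure :: "real set \<Rightarrow> real set \<Rightarrow> (real \<Rightarrow> real \<Rightarrow> real) \<Rightarrow> bool" where
  "signal_structure Th S sg \<longleftrightarrow> finite S \<and> S \<noteq> {} \<and>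
     (\<forall>s\<in>S. \<forall>th\<in>Th. 0 \<le> sg s th \<and> sg s th \<le> 1) \<and>
     (\<forall>th\<in>Th. (\<Sum>s\<in>S. sg s th) = 1) \<and>
     (\<forall>s\<in>S. \<exists>th\<in>Th. sg s th > 0)"

definition posterior :: "real set \<Rightarrow> (real \<Rightarrow> real) \<Rightarrow> (real \<Rightarrow> real \<Rightarrow> real) \<Rightarrow> real \<Rightarrow> real \<Rightarrow> real" where
  "posterior Th q sg s th = q th * sg s th / (\<Sum>th'\<in>Th. q th' * sg s th')"

definition exp_val :: "real set \<Rightarrow> (real \<Rightarrow> real) \<Rightarrow> (real \<Rightarrow> real \<Rightarrow> real) \<Rightarrow> real \<Rightarrow> (real \<Rightarrow> real) \<Rightarrow> real" where
  "exp_val Th q sg s a = (\<Sum>th\<in>Th. posterior Th q sg s th * a th)"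

definition wage :: "real set \<Rightarrow> (real \<Rightarrow> real) set \<Rightarrow> real \<Rightarrow> (real \<Rightarrow> real) \<Rightarrow> (real \<Rightarrow> real \<Rightarrow> real) \<Rightarrow> real" where
  "wage Th A s q sg = Max (exp_val Th q sg s ` A)"

definition Wage :: "real set \<Rightarrow> (real \<Rightarrow> real) set \<Rightarrow> (real \<Rightarrow> real) \<Rightarrow> (real \<Rightarrow> real)
    \<Rightarrow> real set \<Rightarrow> (real \<Rightarrow> real \<Rightarrow> real) \<Rightarrow> real" where
  "Wage Th A p q S sg = (\<Sum>th\<in>Th. p th * (\<Sum>s\<in>S. sg s th * wage Th A s q sg))"

definition argmax_tasks :: "real set \<Rightarrow> (real \<Rightarrow> real) set \<Rightarrow> (real \<Rightarrow> real) \<Rightarrow> (real \<Rightarrow> real \<Rightarrow> real) \<Rightarrow> real \<Rightarrow> (real \<Rightarrow> real) set" where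
  "argmax_tasks Th A q sg s = {a\<in>A. \<forall>b\<in>A. exp_val Th q sg s b \<le> exp_val Th q sg s a}"

definition lr_geq :: "real set \<Rightarrow> (real \<Rightarrow> real) \<Rightarrow> (real \<Rightarrow> real) \<Rightarrow> bool" where
  "lr_geq Th q' q \<longleftrightarrow> (\<forall>th\<in>Th. \<forall>th'\<in>Th. th' > th \<longrightarrow> q th * q' th' \<ge> q th' * q' th)"

text \<open>g s s' = g(s|s') is a garbling kernel from (S',sg') to (S,sg).\<close>
definition garbling_kernel :: "real set \<Rightarrow> real set \<Rightarrow> (real \<Rightarrow> real \<Rightarrow> real) \<Rightarrow> real set
    \<Rightarrow> (real \<Rightarrow> real \<Rightarrow> real) \<Rightarrow> (real \<Rightarrow> real \<Rightarrow> real) \<Rightarrow> bool" where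
  "garbling_kernel Th S' sg' S sg g \<longleftrightarrow>
     (\<forall>s\<in>S. \<forall>s'\<in>S'. 0 \<le> g s s' \<and> g s s' \<le> 1) \<and>
     (\<forall>s'\<in>S'. (\<Sum>s\<in>S. g s s') = 1) \<and>
     (\<forall>s\<in>S. \<forall>th\<in>Th. sg s th = (\<Sum>s'\<in>S'. g s s' * sg' s' th))"

definition blackwell_geq :: "real set \<Rightarrow> real set \<Rightarrow> (real \<Rightarrow> real \<Rightarrow> real) \<Rightarrow> real set
    \<Rightarrow> (real \<Rightarrow> real \<Rightarrow> real) \<Rightarrow> bool" where
  "blackwell_geq Th S' sg' S sg \<longleftrightarrow> (\<exists>g. garbling_kernel Th S' sg' S sg g)"

definition MLR :: "real set \<Rightarrow> real set \<Rightarrow> (real \<Rightarrow> real \<Rightarrow> real) \<Rightarrow> bool" where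
  "MLR Th S sg \<longleftrightarrow> (\<forall>s\<in>S. \<forall>s'\<in>S. \<forall>th\<in>Th. \<forall>th'\<in>Th. s' > s \<longrightarrow> th' > th \<longrightarrow>
      sg s th * sg s' th' \<ge> sg s th' * sg s' th)"

definition slightly_more_informative :: "real set \<Rightarrow> (real \<Rightarrow> real) set \<Rightarrow> (real \<Rightarrow> real)
    \<Rightarrow> real set \<Rightarrow> (real \<Rightarrow> real \<Rightarrow> real) \<Rightarrow> real set \<Rightarrow> (real \<Rightarrow> real \<Rightarrow> real) \<Rightarrow> bool" where
  "slightly_more_informative Th A q S' sg' S sg \<longleftrightarrow>
     (\<exists>g. garbling_kernel Th S' sg' S sg g \<and>
        (\<forall>s\<in>S. \<forall>s'\<in>S'. g s s' > 0 \<longrightarrow>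
           argmax_tasks Th A q sg s \<inter> argmax_tasks Th A q sg' s' \<noteq> {}))"

text \<open>The five properties (i)--(v), indexed 1..5.\<close>
definition prop_k :: "nat \<Rightarrow> real set \<Rightarrow> (real \<Rightarrow> real) set \<Rightarrow> (real \<Rightarrow> real) \<Rightarrow> (real \<Rightarrow> real)
    \<Rightarrow> (real \<Rightarrow> real) \<Rightarrow> real set \<Rightarrow> (real \<Rightarrow> real \<Rightarrow> real) \<Rightarrow> real set \<Rightarrow> (real \<Rightarrow> real \<Rightarrow> real) \<Rightarrow> bool" where
  "prop_k k Th A p qI qJ S sg S' sg' =
     (if k = 1 then monotone_firm Th A
      else if k = 2 then MLR Th S' sg'
      else if k = 3 then lr_geq Th qI p
      else if k = 4 then lr_geq Th p qJ
      else slightly_more_informative Th A qI S' sg' S sg \<and>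
           slightly_more_informative Th A qJ S' sg' S sg)"

definition admissible_tuple :: "real set \<Rightarrow> (real \<Rightarrow> real) set \<Rightarrow> (real \<Rightarrow> real) \<Rightarrow> (real \<Rightarrow> real)
    \<Rightarrow> (real \<Rightarrow> real) \<Rightarrow> real set \<Rightarrow> (real \<Rightarrow> real \<Rightarrow> real) \<Rightarrow> real set \<Rightarrow> (real \<Rightarrow> real \<Rightarrow> real) \<Rightarrow> bool" where
  "admissible_tuple Th A p qI qJ S sg S' sg' \<longleftrightarrow>
     skill_types Th \<and> firm A \<and> full_support Th p \<and> full_support Th qI \<and> full_support Th qJ \<and>
     lr_geq Th qI qJ \<and> signal_structure Th S sg \<and> signal_structure Th S' sg' \<and>
     blackwell_geq Th S' sg' S sg"

end

theory Submission
  imports Defs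
begin

text \<open>All five counterexamples have two skill types 0 < 1, a binary signal structure as the
  more informative one, and the uninformative structure as the less informative one; every
  signal structure garbles into the latter. Against this baseline the wage is simply the best
  prior expected output, and slight informativeness only asks that for every binary signal some
  task optimal ex ante stays optimal after that signal.\<close>

abbreviation uninformative :: "real \<Rightarrow> real \<Rightarrow> real" where
  "uninformative \<equiv> \<lambda>_ _. 1"

lemma signal_structure_uninformative:
  "Th \<noteq> {} \<Longrightarrow> signal_structure Th {s} uninformative"
  unfolding signal_structure_def by auto

lemma garbling_kernel_uninformative:
  assumes "signal_structure Th S' sg'"
  shows "garbling_kernel Th S' sg' {s} uninformative (\<lambda>_ _. 1)"
  using assms unfolding garbling_kernel_def signal_structure_def by (simp add: sum_distrib_left)

lemma blackwell_geq_uninformative: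
  "signal_structure Th S' sg' \<Longrightarrow> blackwell_geq Th S' sg' {s} uninformative"
  unfolding blackwell_geq_def using garbling_kernel_uninformative by blast

lemma garbling_kernel_to_singleton:
  assumes "garbling_kernel Th S' sg' {s} sg g" "s' \<in> S'"
  shows "g s s' = 1"
  using assms unfolding garbling_kernel_def by auto

lemma slightly_more_informative_than_uninformative_iff:
  assumes "signal_structure Th S' sg'"
  shows "slightly_more_informative Th A q S' sg' {s} uninformative \<longleftrightarrow>
    (\<forall>s'\<in>S'. \<exists>a\<in>A. a \<in> argmax_tasks Th A q uninformative s \<and> a \<in> argmax_tasks Th A q sg' s')"
    (is "_ \<longleftrightarrow> (\<forall>s'\<in>S'. ?common s')")
proof
  assume "slightly_more_informative Th A q S' sg' {s} uninformative"
  then obtain g where g: "garbling_kernel Th S' sg' {s} uninformative g"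
    and common: "\<And>s'. s' \<in> S' \<Longrightarrow> g s s' > 0 \<Longrightarrow>
      argmax_tasks Th A q uninformative s \<inter> argmax_tasks Th A q sg' s' \<noteq> {}"
    unfolding slightly_more_informative_def by blast
  show "\<forall>s'\<in>S'. ?common s'"
  proof
    fix s' assume "s' \<in> S'"
    then have "g s s' = 1" using garbling_kernel_to_singleton[OF g] by blast
    with common[OF \<open>s' \<in> S'\<close>] show "?common s'" unfolding argmax_tasks_def by auto
  qed
next
  assume "\<forall>s'\<in>S'. ?common s'"
  then show "slightly_more_informative Th A q S' sg' {s} uninformative"
    using garbling_kernel_uninformative[OF assms]
    unfolding slightly_more_informative_def by blast
qed

lemma Wage_uninformative:
  assumes "sum p Th = 1"
  shows "Wage Th A p q {s} uninformative = wage Th A s q uninformative"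
  using assms unfolding Wage_def by (simp add: sum_distrib_right[symmetric])

text \<open>A signal matrix on two types and two signals is written
  on01 (on01 \<pi>(0|0) \<pi>(0|1)) (on01 \<pi>(1|0) \<pi>(1|1)).\<close>
definition on01 :: "'a \<Rightarrow> 'a \<Rightarrow> real \<Rightarrow> 'a" where
  "on01 x y = (\<lambda>t. if t = 0 then x else y)"

definition counterexample_without ::
  "nat \<Rightarrow> real set \<Rightarrow> (real \<Rightarrow> real) set \<Rightarrow> (real \<Rightarrow> real) \<Rightarrow> (real \<Rightarrow> real) \<Rightarrow> (real \<Rightarrow> real)
    \<Rightarrow> real set \<Rightarrow> (real \<Rightarrow> real \<Rightarrow> real) \<Rightarrow> real set \<Rightarrow> (real \<Rightarrow> real \<Rightarrow> real) \<Rightarrow> bool" where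
  "counterexample_without k Th A p qI qJ S sg S' sg' \<longleftrightarrow>
     admissible_tuple Th A p qI qJ S sg S' sg' \<and>
     \<not> prop_k k Th A p qI qJ S sg S' sg' \<and>
     (\<forall>j\<in>{1..5} - {k}. prop_k j Th A p qI qJ S sg S' sg') \<and>
     \<not> (Wage Th A p qI S' sg' - Wage Th A p qJ S' sg' \<le> Wage Th A p qI S sg - Wage Th A p qJ S sg)"

lemma counterexample_without_against_uninformative:
  assumes "skill_types Th" "firm A" "full_support Th p" "full_support Th qI" "full_support Th qJ"
    and "lr_geq Th qI qJ" "signal_structure Th S' sg'"
    and "\<not> prop_k k Th A p qI qJ {s} uninformative S' sg'"
    and "\<forall>j\<in>{1,2,3,4,5} - {k}. prop_k j Th A p qI qJ {s} uninformative S' sg'"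
    and "wage Th A s qI uninformative - wage Th A s qJ uninformative
           < Wage Th A p qI S' sg' - Wage Th A p qJ S' sg'"
  shows "counterexample_without k Th A p qI qJ {s} uninformative S' sg'"
proof -
  have "Th \<noteq> {}" using \<open>skill_types Th\<close> unfolding skill_types_def by auto
  have "{1..5} = {1,2,3,4,5::nat}" by auto
  then show ?thesis
    using assms signal_structure_uninformative[OF \<open>Th \<noteq> {}\<close>]
      blackwell_geq_uninformative[OF \<open>signal_structure Th S' sg'\<close>]
    unfolding counterexample_without_def admissible_tuple_def full_support_def
    by (simp add: Wage_uninformative)
qed

lemmas tuple_defs = on01_def skill_types_def firm_def full_support_def lr_geq_def
  signal_structure_def monotone_firm_def MLR_def argmax_tasks_def
  Wage_def wage_def exp_val_def posterior_def

lemma counterexample_without_monotone_firm: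
  defines "A \<equiv> {on01 (-1) (-2), on01 1 (-1)}"
    and "p \<equiv> on01 (1/2) (1/2)" and "qI \<equiv> on01 (1/4) (3/4)" and "qJ \<equiv> on01 (3/4) (1/4)"
    and "sg' \<equiv> on01 (on01 (2/3) (1/3)) (on01 (1/3) (2/3))"
  shows "counterexample_without 1 {0,1} A p qI qJ {0} uninformative {0,1} sg'"
proof -
  note defs = A_def p_def qI_def qJ_def sg'_def tuple_defs
  have sg': "signal_structure {0,1} {0,1} sg'"
    unfolding defs by simp
  have "skill_types {0,1}" "firm A" "full_support {0,1} p" "full_support {0,1} qI"
    "full_support {0,1} qJ" "lr_geq {0,1} qI qJ"
    unfolding defs by simp_all
  moreover have "\<not> monotone_firm {0,1} A" "MLR {0,1} {0,1} sg'" "lr_geq {0,1} qI p" "lr_geq {0,1} p qJ"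
    unfolding defs by simp_all
  moreover have "slightly_more_informative {0,1} A qI {0,1} sg' {0} uninformative"
    "slightly_more_informative {0,1} A qJ {0,1} sg' {0} uninformative"
    unfolding slightly_more_informative_than_uninformative_iff[OF sg'] unfolding defs by simp_all
  moreover have "wage {0,1} A 0 qI uninformative = -1/2" "wage {0,1} A 0 qJ uninformative = 1/2"
    "Wage {0,1} A p qI {0,1} sg' = -16/35" "Wage {0,1} A p qJ {0,1} sg' = 16/35"
    unfolding defs by simp_all
  ultimately show ?thesis
    using sg' by (intro counterexample_without_against_uninformative) (simp_all add: prop_k_def insert_Diff_if)
qed

lemma counterexample_without_MLR:
  defines "A \<equiv> {on01 (-1) 0, on01 (-2) 1}"
    and "p \<equiv> on01 (1/2) (1/2)" and "qI \<equiv> on01 (1/2) (1/2)" and "qJ \<equiv> on01 (4/5) (1/5)"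
    and "sg' \<equiv> on01 (on01 (3/5) (3/4)) (on01 (2/5) (1/4))"
  shows "counterexample_without 2 {0,1} A p qI qJ {0} uninformative {0,1} sg'"
proof -
  note defs = A_def p_def qI_def qJ_def sg'_def tuple_defs
  have sg': "signal_structure {0,1} {0,1} sg'"
    unfolding defs by simp
  have "skill_types {0,1}" "firm A" "full_support {0,1} p" "full_support {0,1} qI"
    "full_support {0,1} qJ" "lr_geq {0,1} qI qJ"
    unfolding defs by simp_all
  moreover have "\<not> MLR {0,1} {0,1} sg'" "monotone_firm {0,1} A" "lr_geq {0,1} qI p" "lr_geq {0,1} p qJ"
    unfolding defs by simp_all
  moreover have "slightly_more_informative {0,1} A qI {0,1} sg' {0} uninformative"
    "slightly_more_informative {0,1} A qJ {0,1} sg' {0} uninformative"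
    unfolding slightly_more_informative_than_uninformative_iff[OF sg'] unfolding defs by simp_all
  moreover have "wage {0,1} A 0 qI uninformative = -1/2" "wage {0,1} A 0 qJ uninformative = -4/5"
    "Wage {0,1} A p qI {0,1} sg' = -17/40" "Wage {0,1} A p qJ {0,1} sg' = -206/259"
    unfolding defs by simp_all
  ultimately show ?thesis
    using sg' by (intro counterexample_without_against_uninformative) (simp_all add: prop_k_def insert_Diff_if)
qed

lemma counterexample_without_lr_geq_qI_p:
  defines "A \<equiv> {on01 (-2) 2, on01 0 1}"
    and "p \<equiv> on01 (1/2) (1/2)" and "qI \<equiv> on01 (3/4) (1/4)" and "qJ \<equiv> on01 (4/5) (1/5)"
    and "sg' \<equiv> on01 (on01 (1/3) 0) (on01 (2/3) 1)"
  shows "counterexample_without 3 {0,1} A p qI qJ {0} uninformative {0,1} sg'"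
proof -
  note defs = A_def p_def qI_def qJ_def sg'_def tuple_defs
  have sg': "signal_structure {0,1} {0,1} sg'"
    unfolding defs by simp
  have "skill_types {0,1}" "firm A" "full_support {0,1} p" "full_support {0,1} qI"
    "full_support {0,1} qJ" "lr_geq {0,1} qI qJ"
    unfolding defs by simp_all
  moreover have "\<not> lr_geq {0,1} qI p" "monotone_firm {0,1} A" "MLR {0,1} {0,1} sg'" "lr_geq {0,1} p qJ"
    unfolding defs by simp_all
  moreover have "slightly_more_informative {0,1} A qI {0,1} sg' {0} uninformative"
    "slightly_more_informative {0,1} A qJ {0,1} sg' {0} uninformative"
    unfolding slightly_more_informative_than_uninformative_iff[OF sg'] unfolding defs by simp_all
  moreover have "wage {0,1} A 0 qI uninformative = 1/4" "wage {0,1} A 0 qJ uninformative = 1/5"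
    "Wage {0,1} A p qI {0,1} sg' = 5/18" "Wage {0,1} A p qJ {0,1} sg' = 5/22"
    unfolding defs by simp_all
  ultimately show ?thesis
    using sg' by (intro counterexample_without_against_uninformative) (simp_all add: prop_k_def insert_Diff_if)
qed

lemma counterexample_without_lr_geq_p_qJ:
  defines "A \<equiv> {on01 (-2) (-1)}"
    and "p \<equiv> on01 (3/4) (1/4)" and "qI \<equiv> on01 (1/5) (4/5)" and "qJ \<equiv> on01 (1/4) (3/4)"
    and "sg' \<equiv> on01 (on01 1 (3/4)) (on01 0 (1/4))"
  shows "counterexample_without 4 {0,1} A p qI qJ {0} uninformative {0,1} sg'"
proof -
  note defs = A_def p_def qI_def qJ_def sg'_def tuple_defs
  have sg': "signal_structure {0,1} {0,1} sg'"
    unfolding defs by simp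
  have "skill_types {0,1}" "firm A" "full_support {0,1} p" "full_support {0,1} qI"
    "full_support {0,1} qJ" "lr_geq {0,1} qI qJ"
    unfolding defs by simp_all
  moreover have "\<not> lr_geq {0,1} p qJ" "monotone_firm {0,1} A" "MLR {0,1} {0,1} sg'" "lr_geq {0,1} qI p"
    unfolding defs by simp_all
  moreover have "slightly_more_informative {0,1} A qI {0,1} sg' {0} uninformative"
    "slightly_more_informative {0,1} A qJ {0,1} sg' {0} uninformative"
    unfolding slightly_more_informative_than_uninformative_iff[OF sg'] unfolding defs by simp_all
  moreover have "wage {0,1} A 0 qI uninformative = -6/5" "wage {0,1} A 0 qJ uninformative = -5/4"
    "Wage {0,1} A p qI {0,1} sg' = -79/64" "Wage {0,1} A p qJ {0,1} sg' = -67/52"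
    unfolding defs by simp_all
  ultimately show ?thesis
    using sg' by (intro counterexample_without_against_uninformative) (simp_all add: prop_k_def insert_Diff_if)
qed

lemma counterexample_without_slightly_more_informative:
  defines "A \<equiv> {on01 0 1, on01 (-2) 2}"
    and "p \<equiv> on01 (1/2) (1/2)" and "qI \<equiv> on01 (1/4) (3/4)" and "qJ \<equiv> on01 (1/2) (1/2)"
    and "sg' \<equiv> on01 (on01 (1/2) 0) (on01 (1/2) 1)"
  shows "counterexample_without 5 {0,1} A p qI qJ {0} uninformative {0,1} sg'"
proof -
  note defs = A_def p_def qI_def qJ_def sg'_def tuple_defs
  have sg': "signal_structure {0,1} {0,1} sg'"
    unfolding defs by simp
  have "skill_types {0,1}" "firm A" "full_support {0,1} p" "full_support {0,1} qI"
    "full_support {0,1} qJ" "lr_geq {0,1} qI qJ"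
    unfolding defs by simp_all
  moreover have "monotone_firm {0,1} A" "MLR {0,1} {0,1} sg'" "lr_geq {0,1} qI p" "lr_geq {0,1} p qJ"
    unfolding defs by simp_all
  moreover have "\<not> slightly_more_informative {0,1} A qI {0,1} sg' {0} uninformative"
    unfolding slightly_more_informative_than_uninformative_iff[OF sg'] unfolding defs by simp_all
  moreover have "wage {0,1} A 0 qI uninformative = 1" "wage {0,1} A 0 qJ uninformative = 1/2"
    "Wage {0,1} A p qI {0,1} sg' = 15/14" "Wage {0,1} A p qJ {0,1} sg' = 1/2"
    unfolding defs by simp_all
  ultimately show ?thesis
    using sg' by (intro counterexample_without_against_uninformative) (simp_all add: prop_k_def insert_Diff_if)
qed

theorem proposition2:
  fixes k :: nat
  assumes "k \<in> {1..5}"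
  shows "\<exists>Th A p qI qJ S sg S' sg'.
           admissible_tuple Th A p qI qJ S sg S' sg' \<and>
           \<not> prop_k k Th A p qI qJ S sg S' sg' \<and>
           (\<forall>j\<in>{1..5} - {k}. prop_k j Th A p qI qJ S sg S' sg') \<and>
           \<not> (Wage Th A p qI S' sg' - Wage Th A p qJ S' sg'
                \<le> Wage Th A p qI S sg - Wage Th A p qJ S sg)"
proof -
  from assms consider "k = 1" | "k = 2" | "k = 3" | "k = 4" | "k = 5" by force
  then have "\<exists>Th A p qI qJ S sg S' sg'. counterexample_without k Th A p qI qJ S sg S' sg'"
  proof cases
    case 1 show ?thesis unfolding 1 by (rule exI)+ (rule counterexample_without_monotone_firm)
  next
    case 2 show ?thesis unfolding 2 by (rule exI)+ (rule counterexample_without_MLR)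
  next
    case 3 show ?thesis unfolding 3 by (rule exI)+ (rule counterexample_without_lr_geq_qI_p)
  next
    case 4 show ?thesis unfolding 4 by (rule exI)+ (rule counterexample_without_lr_geq_p_qJ)
  next
    case 5 show ?thesis unfolding 5 by (rule exI)+ (rule counterexample_without_slightly_more_informative)
  qed
  then show ?thesis
    unfolding counterexample_without_def .
qed

end
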